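(* Let $(X,d)$ be a locally compact, geodesically complete CAT(0)-space connected at infinity, and let $d'$ be a metric on $X$ such that $(X,d')$ is a locally compact geodesically complete CAT(0)-space and $d(x,y)\le1\iff d'(x,y)\le1$ for all $x,y\in X$. Let $a,b$ be complete geodesics of $(X,d)$ connected by an asymptotic chain $a=a_0,a_1,\dots,a_n=b$ such that for every $i$ the image of $a_i$ is also the image of a complete geodesic of $(X,d')$. If $d(a(t_1),a(t_2))=d'(a(t_1),a(t_2))$ for all $t_1,t_2\in\mathbb R$, then $d(b(t_1),b(t_2))=d'(b(t_1),b(t_2))$ for all $t_1,t_2\in\mathbb R$.
   Context: Two geodesic rays in a CAT(0)-space are asymptotic if their Hausdorff distance is finite; two complete geodesics are asymptotic (in some direction) if they contain asymptotic rays. Geodesics $a,b$ are connected by an asymptotic chain if there is a finite sequence of complete geodesics $a=a_0,\dots,a_n=b$ such that $a_{i-1}$ and $a_i$ are asymptotic in some direction for each $1\le i\le n$. Geodesically complete: geodesic, and every geodesic segment lies in a complete geodesic. Connected at infinity: the complement of every metric ball is path connected. *)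

theory Defs
  imports "HOL-Analysis.Analysis"
begin

definition geodesic_segment :: "'a set \<Rightarrow> ('a \<Rightarrow> 'a \<Rightarrow> real) \<Rightarrow> (real \<Rightarrow> 'a) \<Rightarrow> 'a \<Rightarrow> 'a \<Rightarrow> bool" where
  "geodesic_segment X d c x y \<longleftrightarrow>
     c 0 = x \<and> c (d x y) = y \<and> c ` {0..d x y} \<subseteq> X \<and>
     (\<forall>s\<in>{0..d x y}. \<forall>t\<in>{0..d x y}. d (c s) (c t) = \<bar>s - t\<bar>)"

definition geodesic_space :: "'a set \<Rightarrow> ('a \<Rightarrow> 'a \<Rightarrow> real) \<Rightarrow> bool" where
  "geodesic_space X d \<longleftrightarrow> (\<forall>x\<in>X. \<forall>y\<in>X. \<exists>c. geodesic_segment X d c x y)"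

text \<open>CAT(0) (Bridson--Haefliger II.1.1): geodesic, and for every geodesic triangle and
  points p, q on two of its sides (sharing a vertex x) the distance d p q is at most the
  distance of the comparison points in the Euclidean comparison triangle.  The comparison
  distance is given by the law of cosines at the comparison vertex of x.\<close>
definition CAT0 :: "'a set \<Rightarrow> ('a \<Rightarrow> 'a \<Rightarrow> real) \<Rightarrow> bool" where
  "CAT0 X d \<longleftrightarrow> geodesic_space X d \<and>
     (\<forall>x\<in>X. \<forall>y\<in>X. \<forall>z\<in>X. \<forall>c1 c2 c3.
        geodesic_segment X d c1 x y \<and> geodesic_segment X d c2 x z \<and> geodesic_segment X d c3 y z \<longrightarrow>
        (\<forall>s\<in>{0..d x y}. \<forall>t\<in>{0..d x z}.
           (d (c1 s) (c2 t))\<^sup>2 \<le> s\<^sup>2 + t\<^sup>2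
              - s * t * ((d x y)\<^sup>2 + (d x z)\<^sup>2 - (d y z)\<^sup>2) / (d x y * d x z)))"

definition complete_geodesic :: "'a set \<Rightarrow> ('a \<Rightarrow> 'a \<Rightarrow> real) \<Rightarrow> (real \<Rightarrow> 'a) \<Rightarrow> bool" where
  "complete_geodesic X d g \<longleftrightarrow> range g \<subseteq> X \<and> (\<forall>s t. d (g s) (g t) = \<bar>s - t\<bar>)"

definition geodesic_ray :: "'a set \<Rightarrow> ('a \<Rightarrow> 'a \<Rightarrow> real) \<Rightarrow> (real \<Rightarrow> 'a) \<Rightarrow> bool" where
  "geodesic_ray X d r \<longleftrightarrow> r ` {0..} \<subseteq> X \<and> (\<forall>s\<ge>0. \<forall>t\<ge>0. d (r s) (r t) = \<bar>s - t\<bar>)"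

definition geodesically_complete :: "'a set \<Rightarrow> ('a \<Rightarrow> 'a \<Rightarrow> real) \<Rightarrow> bool" where
  "geodesically_complete X d \<longleftrightarrow> geodesic_space X d \<and>
     (\<forall>x\<in>X. \<forall>y\<in>X. \<forall>c. geodesic_segment X d c x y \<longrightarrow>
        (\<exists>g. complete_geodesic X d g \<and> c ` {0..d x y} \<subseteq> range g))"

definition asymptotic_rays :: "('a \<Rightarrow> 'a \<Rightarrow> real) \<Rightarrow> (real \<Rightarrow> 'a) \<Rightarrow> (real \<Rightarrow> 'a) \<Rightarrow> bool" where
  "asymptotic_rays d r1 r2 \<longleftrightarrow> (\<exists>C.
     (\<forall>t\<ge>0. \<exists>s\<ge>0. d (r1 t) (r2 s) \<le> C) \<and> (\<forall>t\<ge>0. \<exists>s\<ge>0. d (r2 t) (r1 s) \<le> C))"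

definition asymptotic_geodesics :: "'a set \<Rightarrow> ('a \<Rightarrow> 'a \<Rightarrow> real) \<Rightarrow> (real \<Rightarrow> 'a) \<Rightarrow> (real \<Rightarrow> 'a) \<Rightarrow> bool" where
  "asymptotic_geodesics X d a b \<longleftrightarrow> (\<exists>r1 r2. geodesic_ray X d r1 \<and> geodesic_ray X d r2 \<and>
     r1 ` {0..} \<subseteq> range a \<and> r2 ` {0..} \<subseteq> range b \<and> asymptotic_rays d r1 r2)"

definition connected_at_infinity :: "'a set \<Rightarrow> ('a \<Rightarrow> 'a \<Rightarrow> real) \<Rightarrow> bool" where
  "connected_at_infinity X d \<longleftrightarrow> (\<forall>x\<in>X. \<forall>r.
     path_connectedin (Metric_space.mtopology X d) (X - Metric_space.mball X d x r))"

end

theory Submission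
  imports Defs
begin

text \<open>
  Since d and d' have the same closed unit balls and both are geodesic, \<open>d x y \<le> n \<longleftrightarrow> d' x y \<le> n\<close>
  for every natural number n.  Hence, if \<open>u s - s \<rightarrow> \<alpha>\<close> and \<open>v s - s \<rightarrow> \<beta>\<close> for two functions
  with the same integer sublevel sets, then \<open>\<alpha> = \<beta>\<close>.  Applied to \<open>d (r s) y\<close> and \<open>d' (r s) y\<close>
  for a ray r of a, on which d and d' agree, this shows that the Busemann function of r is the
  same for both metrics.

  For an asymptotic neighbour b of a, write \<open>b t = g (\<psi> t)\<close> with g a d'-geodesic, and let k be
  the Busemann function of r along b.  Then k is 1-Lipschitz both for \<open>\<bar>s - t\<bar>\<close> and for
  \<open>\<bar>\<psi> s - \<psi> t\<bar>\<close>, and \<open>k t + t\<close> stays bounded along the ray of b asymptotic to r.  After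
  replacing \<open>\<psi>\<close> by \<open>-\<psi>\<close> if necessary, \<open>\<psi> + k\<close> and \<open>k t + t\<close> are eventually increasing and
  bounded, so \<open>\<psi> t - t\<close> converges, and the integer sublevel argument once more shows that
  \<open>\<psi>\<close> is an isometry, i.e. d = d' on b.
\<close>

lemma offset_limits_eq_if_nat_sublevels_agree:
  fixes u v :: "real \<Rightarrow> real"
  assumes levels: "\<forall>\<^sub>F s in at_top. \<forall>n::nat. u s \<le> real n \<longleftrightarrow> v s \<le> real n"
    and u: "((\<lambda>s. u s - s) \<longlongrightarrow> \<alpha>) at_top" and v: "((\<lambda>s. v s - s) \<longlongrightarrow> \<beta>) at_top"
  shows "\<alpha> = \<beta>"
proof -
  have not_less: "\<not> a < b"
    if lev: "\<forall>\<^sub>F s in at_top. \<forall>n::nat. f s \<le> real n \<longleftrightarrow> g s \<le> real n"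
      and f: "((\<lambda>s. f s - s) \<longlongrightarrow> a) at_top" and g: "((\<lambda>s. g s - s) \<longlongrightarrow> b) at_top"
    for f g :: "real \<Rightarrow> real" and a b
  proof
    assume "a < b"
    define m where "m = (a + b) / 2"
    have "\<forall>\<^sub>F s in at_top. f s - s < m" "\<forall>\<^sub>F s in at_top. m < g s - s"
      using order_tendstoD(2)[OF f, of m] order_tendstoD(1)[OF g, of m] \<open>a < b\<close>
      by (simp_all add: m_def)
    with lev have "\<forall>\<^sub>F s in at_top.
        (\<forall>n::nat. f s \<le> real n \<longleftrightarrow> g s \<le> real n) \<and> f s - s < m \<and> m < g s - s"
      by (intro eventually_conj)
    then obtain S where S: "\<And>s. s \<ge> S \<Longrightarrow>
        (\<forall>n::nat. f s \<le> real n \<longleftrightarrow> g s \<le> real n) \<and> f s - s < m \<and> m < g s - s"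
      by (auto simp: eventually_at_top_linorder)
    define n where "n = nat \<lceil>S + m\<rceil>"
    have "real n - m \<ge> S"
      unfolding n_def by linarith
    from S[OF this] have "f (real n - m) \<le> real n \<longleftrightarrow> g (real n - m) \<le> real n"
      and "f (real n - m) < real n" and "real n < g (real n - m)"
      by auto
    then show False
      by linarith
  qed
  have "\<forall>\<^sub>F s in at_top. \<forall>n::nat. v s \<le> real n \<longleftrightarrow> u s \<le> real n"
    using levels by (auto elim: eventually_mono)
  then show ?thesis
    using not_less[OF levels u v] not_less[OF _ v u] by linarith
qed

lemma tendsto_at_top_if_eventually_increasing:
  fixes f :: "real \<Rightarrow> real"
  assumes increasing: "\<And>x. \<forall>\<^sub>F y in at_top. f x \<le> f y"
    and bounded: "\<forall>\<^sub>F y in at_top. f y \<le> B"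
  shows "\<exists>L. (f \<longlongrightarrow> L) at_top"
proof -
  obtain T where T: "\<And>y. y \<ge> T \<Longrightarrow> f y \<le> B"
    using bounded by (auto simp: eventually_at_top_linorder)
  have bdd: "bdd_above (f ` {T..})"
    using T by (intro bdd_aboveI2[where M = B]) auto
  have "(f \<longlongrightarrow> (SUP y\<in>{T..}. f y)) at_top"
  proof (rule increasing_tendsto)
    show "\<forall>\<^sub>F y in at_top. f y \<le> (SUP y\<in>{T..}. f y)"
      using eventually_ge_at_top[of T] by eventually_elim (auto intro: cSUP_upper[OF _ bdd])
    show "\<forall>\<^sub>F y in at_top. a < f y" if less_Sup: "a < (SUP y\<in>{T..}. f y)" for a
    proof -
      obtain x where "a < f x"
        using less_Sup less_cSUP_iff[OF _ bdd] by auto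
      then show ?thesis
        using increasing[of x] by (auto elim: eventually_mono)
    qed
  qed
  then show ?thesis ..
qed

lemma sign_eventually_constant_if_coarsely_continuous:
  fixes f :: "real \<Rightarrow> real"
  assumes coarse: "\<And>x y. \<bar>x - y\<bar> \<le> 1 \<Longrightarrow> \<bar>f x - f y\<bar> \<le> 1"
    and away: "\<And>y. y \<ge> N \<Longrightarrow> \<bar>f y\<bar> \<ge> 1"
  shows "(\<forall>y\<ge>N. f y > 0) \<or> (\<forall>y\<ge>N. f y < 0)"
proof -
  have same_sign: "f y > 0 \<longleftrightarrow> f z > 0" if "y \<ge> N" "z \<ge> N" "\<bar>y - z\<bar> \<le> 1" for y z
    using coarse[OF that(3)] away[OF that(1)] away[OF that(2)] by linarith
  have sign_N: "f y > 0 \<longleftrightarrow> f N > 0" if "N \<le> y" "y \<le> N + real n" for y n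
    using that
  proof (induction n arbitrary: y)
    case 0
    then show ?case
      by simp
  next
    case (Suc n)
    define z where "z = max N (y - 1)"
    have "N \<le> z" "z \<le> N + real n" "\<bar>y - z\<bar> \<le> 1"
      using Suc.prems unfolding z_def by auto
    with Suc.IH[of z] same_sign[of y z] Suc.prems(1) show ?case
      by blast
  qed
  have sign_eq: "f y > 0 \<longleftrightarrow> f N > 0" if "y \<ge> N" for y
  proof -
    have "y \<le> N + real (nat \<lceil>y - N\<rceil>)"
      by linarith
    with sign_N that show ?thesis
      by blast
  qed
  have nonzero: "f y \<noteq> 0" if "y \<ge> N" for y
    using away[OF that] by auto
  show ?thesis
  proof (cases "f N > 0")
    case True
    with sign_eq show ?thesis
      by blast
  next
    case False
    with sign_eq nonzero show ?thesis
      by (meson linorder_neqE_linordered_idom)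
  qed
qed

lemma translation_if_filterlim_at_top:
  fixes \<psi> k :: "real \<Rightarrow> real"
  assumes levels: "\<And>x y n. \<bar>x - y\<bar> \<le> real n \<longleftrightarrow> \<bar>\<psi> x - \<psi> y\<bar> \<le> real n"
    and k_lip_\<psi>: "\<And>x y. \<bar>k x - k y\<bar> \<le> \<bar>\<psi> x - \<psi> y\<bar>"
    and k_lip: "\<And>x y. \<bar>k x - k y\<bar> \<le> \<bar>x - y\<bar>"
    and k_bound: "\<And>t. t \<ge> 0 \<Longrightarrow> k t + t \<le> K"
    and \<psi>_top: "filterlim \<psi> at_top at_top"
  shows "\<exists>L. \<forall>x. \<psi> x = x + L"
proof -
  have \<psi>_coarse_lip: "\<psi> y \<le> \<psi> x + \<bar>y - x\<bar> + 1" for x y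
  proof -
    have "\<bar>y - x\<bar> \<le> real (nat \<lceil>\<bar>y - x\<bar>\<rceil>)"
      by linarith
    then have "\<bar>\<psi> y - \<psi> x\<bar> \<le> real (nat \<lceil>\<bar>y - x\<bar>\<rceil>)"
      using levels by blast
    then show ?thesis
      by linarith
  qed
  have \<psi>_eventually_ge: "\<forall>\<^sub>F y in at_top. \<psi> x \<le> \<psi> y" for x
    using \<psi>_top by (simp add: filterlim_at_top)
  have "\<exists>S. ((\<lambda>y. \<psi> y + k y) \<longlongrightarrow> S) at_top"
  proof (rule tendsto_at_top_if_eventually_increasing)
    show "\<forall>\<^sub>F y in at_top. \<psi> x + k x \<le> \<psi> y + k y" for x
      using \<psi>_eventually_ge[of x]
    proof (rule eventually_mono)
      show "\<psi> x + k x \<le> \<psi> y + k y" if "\<psi> x \<le> \<psi> y" for y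
        using that k_lip_\<psi>[of x y] by linarith
    qed
    show "\<forall>\<^sub>F y in at_top. \<psi> y + k y \<le> \<psi> 0 + 1 + K"
    proof (rule eventually_at_top_linorderI)
      show "\<psi> y + k y \<le> \<psi> 0 + 1 + K" if "0 \<le> y" for y
        using that \<psi>_coarse_lip[of y 0] k_bound[of y] by linarith
    qed
  qed
  then obtain S where S: "((\<lambda>y. \<psi> y + k y) \<longlongrightarrow> S) at_top" ..
  have "\<exists>S'. ((\<lambda>y. k y + y) \<longlongrightarrow> S') at_top"
  proof (rule tendsto_at_top_if_eventually_increasing)
    show "\<forall>\<^sub>F y in at_top. k x + x \<le> k y + y" for x
    proof (rule eventually_at_top_linorderI)
      show "k x + x \<le> k y + y" if "x \<le> y" for y
        using that k_lip[of x y] by linarith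
    qed
    show "\<forall>\<^sub>F y in at_top. k y + y \<le> K"
      by (rule eventually_at_top_linorderI) (rule k_bound)
  qed
  then obtain S' where S': "((\<lambda>y. k y + y) \<longlongrightarrow> S') at_top" ..
  have offset: "((\<lambda>y. \<psi> y - y) \<longlongrightarrow> S - S') at_top"
    using tendsto_diff[OF S S'] by simp
  have "\<psi> x = x + (S - S')" for x
  proof -
    have "- x = S - S' - \<psi> x"
    proof (rule offset_limits_eq_if_nat_sublevels_agree)
      show "\<forall>\<^sub>F s in at_top. \<forall>n::nat. \<bar>s - x\<bar> \<le> real n \<longleftrightarrow> \<bar>\<psi> s - \<psi> x\<bar> \<le> real n"
        using levels by simp
      show "((\<lambda>s. \<bar>s - x\<bar> - s) \<longlongrightarrow> - x) at_top"
        by (intro tendsto_eventually eventually_at_top_linorderI[of x]) simp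
      have "\<forall>\<^sub>F s in at_top. \<psi> s - s - \<psi> x = \<bar>\<psi> s - \<psi> x\<bar> - s"
        using \<psi>_eventually_ge[of x] by (rule eventually_mono) simp
      with tendsto_diff[OF offset tendsto_const[of "\<psi> x"]]
      show "((\<lambda>s. \<bar>\<psi> s - \<psi> x\<bar> - s) \<longlongrightarrow> S - S' - \<psi> x) at_top"
        by (rule Lim_transform_eventually)
    qed
    then show ?thesis
      by simp
  qed
  then show ?thesis
    by blast
qed

lemma isometry_if_nat_sublevels_agree:
  fixes \<psi> k :: "real \<Rightarrow> real"
  assumes levels: "\<And>x y n. \<bar>x - y\<bar> \<le> real n \<longleftrightarrow> \<bar>\<psi> x - \<psi> y\<bar> \<le> real n"
    and k_lip_\<psi>: "\<And>x y. \<bar>k x - k y\<bar> \<le> \<bar>\<psi> x - \<psi> y\<bar>"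
    and k_lip: "\<And>x y. \<bar>k x - k y\<bar> \<le> \<bar>x - y\<bar>"
    and k_bound: "\<And>t. t \<ge> 0 \<Longrightarrow> k t + t \<le> K"
  shows "\<bar>\<psi> x - \<psi> y\<bar> = \<bar>x - y\<bar>"
proof -
  define c where "c = K - k 0"
  define N where "N = max 0 (c + 1)"
  have far: "\<bar>\<psi> y - \<psi> 0\<bar> \<ge> y - c" if "y \<ge> 0" for y
    using k_lip_\<psi>[of 0 y] k_bound[OF that] abs_minus_commute[of "\<psi> 0" "\<psi> y"]
    unfolding c_def by linarith
  have "(\<forall>y\<ge>N. \<psi> y - \<psi> 0 > 0) \<or> (\<forall>y\<ge>N. \<psi> y - \<psi> 0 < 0)"
  proof (rule sign_eventually_constant_if_coarsely_continuous)
    show "\<bar>(\<psi> x - \<psi> 0) - (\<psi> y - \<psi> 0)\<bar> \<le> 1" if "\<bar>x - y\<bar> \<le> 1" for x y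
      using levels[of x y 1] that by simp
    show "1 \<le> \<bar>\<psi> y - \<psi> 0\<bar>" if "N \<le> y" for y
      using far[of y] that by (simp add: N_def)
  qed
  then obtain \<sigma> :: real where \<sigma>: "\<bar>\<sigma>\<bar> = 1" and \<sigma>_pos: "\<And>y. y \<ge> N \<Longrightarrow> \<sigma> * (\<psi> y - \<psi> 0) > 0"
  proof (elim disjE)
    assume "\<forall>y\<ge>N. \<psi> y - \<psi> 0 > 0"
    then show thesis
      by (intro that[of 1]) auto
  next
    assume "\<forall>y\<ge>N. \<psi> y - \<psi> 0 < 0"
    then show thesis
      by (intro that[of "-1"]) auto
  qed
  define \<phi> where "\<phi> x = \<sigma> * \<psi> x" for x
  have \<phi>_dist: "\<bar>\<phi> x - \<phi> y\<bar> = \<bar>\<psi> x - \<psi> y\<bar>" for x y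
    using \<sigma> by (simp add: \<phi>_def abs_mult flip: right_diff_distrib)
  have "filterlim \<phi> at_top at_top"
    unfolding filterlim_at_top
  proof
    fix Z
    show "\<forall>\<^sub>F y in at_top. Z \<le> \<phi> y"
    proof (rule eventually_at_top_linorderI)
      fix y
      assume y: "max N (Z - \<phi> 0 + c) \<le> y"
      have "\<phi> y - \<phi> 0 > 0"
        using \<sigma>_pos[of y] y by (simp add: \<phi>_def right_diff_distrib)
      then have "\<phi> y - \<phi> 0 = \<bar>\<psi> y - \<psi> 0\<bar>"
        using \<phi>_dist[of y 0] by simp
      then show "Z \<le> \<phi> y"
        using far[of y] y by (simp add: N_def)
    qed
  qed
  moreover have "\<bar>x - y\<bar> \<le> real n \<longleftrightarrow> \<bar>\<phi> x - \<phi> y\<bar> \<le> real n" for x y n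
    using levels[of x y n] \<phi>_dist[of x y] by simp
  moreover have "\<bar>k x - k y\<bar> \<le> \<bar>\<phi> x - \<phi> y\<bar>" for x y
    by (simp add: \<phi>_dist k_lip_\<psi>)
  ultimately obtain L where "\<And>x. \<phi> x = x + L"
    using translation_if_filterlim_at_top[of \<phi> k K] k_lip k_bound by blast
  then show ?thesis
    using \<phi>_dist[of x y] by simp
qed

definition busemann :: "('a \<Rightarrow> 'a \<Rightarrow> real) \<Rightarrow> (real \<Rightarrow> 'a) \<Rightarrow> 'a \<Rightarrow> real" where
  "busemann d r y = (INF s\<in>{0..}. d (r s) y - s)"

context Metric_space
begin

lemma dist_le_nat_if_unit_dist_le:
  assumes geodesic: "geodesic_space M d" and M': "Metric_space M d'"
    and unit: "\<And>x y. x \<in> M \<Longrightarrow> y \<in> M \<Longrightarrow> d x y \<le> 1 \<Longrightarrow> d' x y \<le> 1"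
    and "x \<in> M" "y \<in> M" "d x y \<le> real n"
  shows "d' x y \<le> real n"
  using assms(4-6)
proof (induction n arbitrary: x)
  case 0
  then have "x = y"
    using nonneg[of x y] zero[of x y] by linarith
  with \<open>y \<in> M\<close> show ?case
    using Metric_space.zero[OF M', of y y] by simp
next
  case (Suc n)
  show ?case
  proof (cases "d x y \<le> 1")
    case True
    with unit Suc.prems show ?thesis
      by fastforce
  next
    case False
    obtain c where "geodesic_segment M d c x y"
      using geodesic Suc.prems unfolding geodesic_space_def by blast
    then have c_x: "c 0 = x" and c_y: "c (d x y) = y" and c_M: "c ` {0..d x y} \<subseteq> M"
      and c_iso: "\<And>s t. s \<in> {0..d x y} \<Longrightarrow> t \<in> {0..d x y} \<Longrightarrow> d (c s) (c t) = \<bar>s - t\<bar>"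
      unfolding geodesic_segment_def by auto
    have "c 1 \<in> M" "d x (c 1) = 1" "d (c 1) y = d x y - 1"
      using False c_M c_iso[of 0 1] c_iso[of 1 "d x y"] c_x c_y by auto
    moreover from this have "d' (c 1) y \<le> real n"
      using Suc by simp
    ultimately show ?thesis
      using unit[of x "c 1"] Metric_space.triangle[OF M', of x "c 1" y] Suc.prems by simp
  qed
qed

lemma bdd_below_ray_excess:
  assumes r: "geodesic_ray M d r" and "y \<in> M"
  shows "bdd_below ((\<lambda>s. d (r s) y - s) ` {0..})"
proof (rule bdd_belowI2)
  fix s :: real
  assume "s \<in> {0..}"
  with r \<open>y \<in> M\<close> have "d (r 0) (r s) \<le> d (r 0) y + d (r s) y"
    unfolding geodesic_ray_def by (intro triangle') auto
  with r \<open>s \<in> {0..}\<close> show "- d (r 0) y \<le> d (r s) y - s"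
    unfolding geodesic_ray_def by auto
qed

lemma busemann_le:
  assumes "geodesic_ray M d r" "y \<in> M" "s \<ge> 0"
  shows "busemann d r y \<le> d (r s) y - s"
  unfolding busemann_def using cINF_lower[OF bdd_below_ray_excess[OF assms(1,2)], of s] assms(3)
  by simp

lemma tendsto_busemann:
  assumes r: "geodesic_ray M d r" and "y \<in> M"
  shows "((\<lambda>s. d (r s) y - s) \<longlongrightarrow> busemann d r y) at_top"
proof (rule decreasing_tendsto)
  show "\<forall>\<^sub>F s in at_top. busemann d r y \<le> d (r s) y - s"
    by (rule eventually_at_top_linorderI) (rule busemann_le[OF assms])
  show "\<forall>\<^sub>F s in at_top. d (r s) y - s < a" if less: "busemann d r y < a" for a
  proof -
    obtain s0 where "s0 \<ge> 0" and s0: "d (r s0) y - s0 < a"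
      using less cINF_less_iff[OF _ bdd_below_ray_excess[OF assms]] unfolding busemann_def by auto
    show ?thesis
    proof (rule eventually_at_top_linorderI)
      fix s
      assume "s0 \<le> s"
      with r \<open>s0 \<ge> 0\<close> \<open>y \<in> M\<close> have "d (r s) y \<le> d (r s) (r s0) + d (r s0) y"
        unfolding geodesic_ray_def by (intro triangle) auto
      with r \<open>s0 \<ge> 0\<close> \<open>s0 \<le> s\<close> s0 show "d (r s) y - s < a"
        unfolding geodesic_ray_def by auto
    qed
  qed
qed

lemma busemann_lipschitz:
  assumes r: "geodesic_ray M d r" and "y \<in> M" "z \<in> M"
  shows "\<bar>busemann d r y - busemann d r z\<bar> \<le> d y z"
proof -
  have "busemann d r y - d y z \<le> busemann d r z" if "y \<in> M" "z \<in> M" for y z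
    unfolding busemann_def[of _ _ z]
  proof (rule cINF_greatest)
    fix s :: real
    assume "s \<in> {0..}"
    with r that have "d (r s) y \<le> d (r s) z + d z y"
      unfolding geodesic_ray_def by (intro triangle) auto
    with busemann_le[OF r \<open>y \<in> M\<close>, of s] \<open>s \<in> {0..}\<close> show "busemann d r y - d y z \<le> d (r s) z - s"
      by (simp add: commute)
  qed simp
  from this[of y z] this[of z y] assms(2,3) show ?thesis
    by (simp add: commute abs_le_iff)
qed

lemma busemann_asymptotic_ray_bounded:
  assumes r: "geodesic_ray M d r" and r': "geodesic_ray M d r'" and "asymptotic_rays d r r'"
  shows "\<exists>K. \<forall>t\<ge>0. busemann d r (r' t) + t \<le> K"
proof -
  obtain C where C: "\<And>t. t \<ge> 0 \<Longrightarrow> \<exists>s\<ge>0. d (r' t) (r s) \<le> C"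
    using \<open>asymptotic_rays d r r'\<close> unfolding asymptotic_rays_def by blast
  have "busemann d r (r' t) + t \<le> 2 * C + d (r 0) (r' 0)" if t: "t \<ge> 0" for t
  proof -
    obtain s where "s \<ge> 0" and s: "d (r' t) (r s) \<le> C"
      using C[OF t] by blast
    have r_M: "r u \<in> M" "r' u \<in> M" if "u \<ge> 0" for u
      using r r' that unfolding geodesic_ray_def by auto
    have "busemann d r (r' t) \<le> d (r s) (r' t) - s"
      using busemann_le[OF r r_M(2)[OF t] \<open>s \<ge> 0\<close>] .
    moreover have "d (r' 0) (r' t) \<le> d (r' 0) (r 0) + d (r 0) (r s) + d (r s) (r' t)"
      using triangle[of "r' 0" "r 0" "r' t"] triangle[of "r 0" "r s" "r' t"] r_M t \<open>s \<ge> 0\<close>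
      by fastforce
    ultimately show ?thesis
      using r r' s t \<open>s \<ge> 0\<close> unfolding geodesic_ray_def by (simp add: commute)
  qed
  then show ?thesis
    by blast
qed

lemma busemann_eq_if_nat_sublevels_agree:
  assumes M': "Metric_space M d'" and r: "geodesic_ray M d r" and r': "geodesic_ray M d' r"
    and "y \<in> M" and levels: "\<And>x n. x \<in> M \<Longrightarrow> d x y \<le> real n \<longleftrightarrow> d' x y \<le> real n"
  shows "busemann d r y = busemann d' r y"
proof (rule offset_limits_eq_if_nat_sublevels_agree)
  show "\<forall>\<^sub>F s in at_top. \<forall>n::nat. d (r s) y \<le> real n \<longleftrightarrow> d' (r s) y \<le> real n"
    using r levels unfolding geodesic_ray_def by (intro eventually_at_top_linorderI[of 0]) auto
  show "((\<lambda>s. d (r s) y - s) \<longlongrightarrow> busemann d r y) at_top"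
    using tendsto_busemann[OF r \<open>y \<in> M\<close>] .
  show "((\<lambda>s. d' (r s) y - s) \<longlongrightarrow> busemann d' r y) at_top"
    using Metric_space.tendsto_busemann[OF M' r' \<open>y \<in> M\<close>] .
qed

end

lemma half_line_isometry_cases:
  fixes \<tau> :: "real \<Rightarrow> real"
  assumes iso: "\<And>s t. s \<ge> 0 \<Longrightarrow> t \<ge> 0 \<Longrightarrow> \<bar>\<tau> s - \<tau> t\<bar> = \<bar>s - t\<bar>"
  shows "\<exists>\<sigma>. \<bar>\<sigma>\<bar> = 1 \<and> (\<forall>t\<ge>0. \<tau> t = \<tau> 0 + \<sigma> * t)"
proof (cases "\<forall>t\<ge>0. \<tau> t = \<tau> 0 + t")
  case True
  then show ?thesis
    by (metis abs_one mult_1)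
next
  case False
  then obtain t1 where "t1 \<ge> 0" "\<tau> t1 \<noteq> \<tau> 0 + t1"
    by blast
  then have t1: "\<tau> t1 = \<tau> 0 - t1" "t1 > 0"
    using iso[of t1 0] by (cases "\<tau> t1 \<ge> \<tau> 0"; simp)+
  have "\<tau> t = \<tau> 0 + (-1) * t" if "t \<ge> 0" for t
  proof (rule ccontr)
    assume "\<tau> t \<noteq> \<tau> 0 + (-1) * t"
    then have "\<tau> t = \<tau> 0 + t" "t > 0"
      using iso[of t 0] that by (cases "\<tau> t \<ge> \<tau> 0"; simp)+
    then show False
      using iso[of t t1] that t1 by linarith
  qed
  moreover have "\<bar>-1 :: real\<bar> = 1"
    by simp
  ultimately show ?thesis
    by blast
qed

lemma complete_geodesic_through_ray:
  assumes b: "complete_geodesic X d b" and r: "geodesic_ray X d r" and r_b: "r ` {0..} \<subseteq> range b"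
  shows "\<exists>c. complete_geodesic X d c \<and> range c = range b \<and> (\<forall>t\<ge>0. c t = r t)"
proof -
  have "\<forall>t\<in>{0..}. \<exists>u. b u = r t"
    using r_b by (metis image_subset_iff rangeE)
  from bchoice[OF this] obtain \<tau> where "\<forall>t\<in>{0..}. b (\<tau> t) = r t" ..
  then have \<tau>: "\<And>t. t \<ge> 0 \<Longrightarrow> b (\<tau> t) = r t"
    by simp
  have "\<bar>\<tau> s - \<tau> t\<bar> = \<bar>s - t\<bar>" if "s \<ge> 0" "t \<ge> 0" for s t
    using b r that \<tau>[of s] \<tau>[of t] unfolding complete_geodesic_def geodesic_ray_def by metis
  then obtain \<sigma> where \<sigma>: "\<bar>\<sigma>\<bar> = 1" and \<tau>_affine: "\<And>t. t \<ge> 0 \<Longrightarrow> \<tau> t = \<tau> 0 + \<sigma> * t"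
    using half_line_isometry_cases by blast
  define c where "c t = b (\<tau> 0 + \<sigma> * t)" for t
  have "complete_geodesic X d c"
    using b \<sigma> unfolding complete_geodesic_def c_def by (auto simp: abs_mult simp flip: right_diff_distrib)
  moreover have "range c = range b"
  proof
    show "range c \<subseteq> range b"
      by (auto simp: c_def)
    have "\<sigma> * \<sigma> = 1"
      using \<sigma> abs_mult_self_eq[of \<sigma>] by simp
    then have "b u = c (\<sigma> * (u - \<tau> 0))" for u
      by (simp add: c_def mult.assoc[symmetric])
    then show "range b \<subseteq> range c"
      by auto
  qed
  moreover have "c t = r t" if "t \<ge> 0" for t
    using \<tau>[OF that] \<tau>_affine[OF that] by (simp add: c_def)
  ultimately show ?thesis
    by blast
qed

lemma dist_agree_on_asymptotic_geodesic:
  assumes M: "Metric_space X d" and M': "Metric_space X d'"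
    and levels: "\<And>x y n. x \<in> X \<Longrightarrow> y \<in> X \<Longrightarrow> d x y \<le> real n \<longleftrightarrow> d' x y \<le> real n"
    and b: "complete_geodesic X d b"
    and g: "complete_geodesic X d' g" and range_g: "range g = range b"
    and agree_a: "\<forall>x\<in>range a. \<forall>y\<in>range a. d x y = d' x y"
    and asymptotic: "asymptotic_geodesics X d a b"
  shows "\<forall>x\<in>range b. \<forall>y\<in>range b. d x y = d' x y"
proof -
  obtain r r' where r: "geodesic_ray X d r" and r': "geodesic_ray X d r'"
    and r_a: "r ` {0..} \<subseteq> range a" and r'_b: "r' ` {0..} \<subseteq> range b"
    and "asymptotic_rays d r r'"
    using asymptotic unfolding asymptotic_geodesics_def by blast
  obtain c where c: "complete_geodesic X d c" and range_c: "range c = range b"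
    and c_r': "\<And>t. t \<ge> 0 \<Longrightarrow> c t = r' t"
    using complete_geodesic_through_ray[OF b r' r'_b] by blast
  have "d' (r s) (r t) = d (r s) (r t)" if "s \<ge> 0" "t \<ge> 0" for s t
  proof -
    from r_a that have "r s \<in> range a" "r t \<in> range a"
      by auto
    with agree_a show ?thesis
      by metis
  qed
  with r have r_d': "geodesic_ray X d' r"
    unfolding geodesic_ray_def by simp
  have c_X: "c t \<in> X" and c_dist: "d (c s) (c t) = \<bar>s - t\<bar>" for s t
    using c unfolding complete_geodesic_def by auto
  have "\<forall>t. \<exists>u. g u = c t"
    using range_g range_c by (metis rangeE rangeI)
  then obtain \<psi> where \<psi>: "\<And>t. g (\<psi> t) = c t"
    by metis
  have \<psi>_dist: "d' (c s) (c t) = \<bar>\<psi> s - \<psi> t\<bar>" for s t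
    using g \<psi>[of s] \<psi>[of t] unfolding complete_geodesic_def by metis
  define k where "k t = busemann d r (c t)" for t
  have k_d': "busemann d' r (c t) = k t" for t
    unfolding k_def using levels c_X
    by (intro Metric_space.busemann_eq_if_nat_sublevels_agree[OF M M' r r_d', symmetric]) auto
  obtain K where "\<And>t. t \<ge> 0 \<Longrightarrow> busemann d r (r' t) + t \<le> K"
    using Metric_space.busemann_asymptotic_ray_bounded[OF M r r' \<open>asymptotic_rays d r r'\<close>] by blast
  then have k_bound: "\<And>t. t \<ge> 0 \<Longrightarrow> k t + t \<le> K"
    by (simp add: k_def c_r')
  have "\<bar>\<psi> s - \<psi> t\<bar> = \<bar>s - t\<bar>" for s t
  proof (rule isometry_if_nat_sublevels_agree[where k = k, OF _ _ _ k_bound])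
    show "\<bar>x - y\<bar> \<le> real n \<longleftrightarrow> \<bar>\<psi> x - \<psi> y\<bar> \<le> real n" for x y n
      using levels[OF c_X c_X, of x y n] by (simp add: c_dist \<psi>_dist)
    show "\<bar>k x - k y\<bar> \<le> \<bar>\<psi> x - \<psi> y\<bar>" for x y
      using Metric_space.busemann_lipschitz[OF M' r_d' c_X c_X, of x y] by (simp add: k_d' \<psi>_dist)
    show "\<bar>k x - k y\<bar> \<le> \<bar>x - y\<bar>" for x y
      using Metric_space.busemann_lipschitz[OF M r c_X c_X, of x y] by (simp add: k_def c_dist)
  qed
  then have "d (c s) (c t) = d' (c s) (c t)" for s t
    by (simp add: c_dist \<psi>_dist)
  with range_c show ?thesis
    by (metis rangeE)
qed

theorem lemma3:
  fixes X :: "'a set" and d d' :: "'a \<Rightarrow> 'a \<Rightarrow> real"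
    and A :: "nat \<Rightarrow> real \<Rightarrow> 'a" and n :: nat
  assumes "Metric_space X d"
    and "locally_compact_space (Metric_space.mtopology X d)"
    and "geodesically_complete X d" and "CAT0 X d"
    and "connected_at_infinity X d"
    and "Metric_space X d'"
    and "locally_compact_space (Metric_space.mtopology X d')"
    and "geodesically_complete X d'" and "CAT0 X d'"
    and "\<forall>x\<in>X. \<forall>y\<in>X. d x y \<le> 1 \<longleftrightarrow> d' x y \<le> 1"
    and "\<forall>i\<le>n. complete_geodesic X d (A i)"
    and "\<forall>i\<in>{1..n}. asymptotic_geodesics X d (A (i - 1)) (A i)"
    and "\<forall>i\<le>n. \<exists>g. complete_geodesic X d' g \<and> range g = range (A i)"
    and "\<forall>t1 t2. d (A 0 t1) (A 0 t2) = d' (A 0 t1) (A 0 t2)"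
  shows "\<forall>t1 t2. d (A n t1) (A n t2) = d' (A n t1) (A n t2)"
proof -
  have geodesic: "geodesic_space X d" and geodesic': "geodesic_space X d'"
    using assms(3,8) unfolding geodesically_complete_def by blast+
  have levels: "d x y \<le> real m \<longleftrightarrow> d' x y \<le> real m" if "x \<in> X" "y \<in> X" for x y m
    using Metric_space.dist_le_nat_if_unit_dist_le[OF assms(1) geodesic assms(6)]
      Metric_space.dist_le_nat_if_unit_dist_le[OF assms(6) geodesic' assms(1)] assms(10) that
    by blast
  have "\<forall>x\<in>range (A i). \<forall>y\<in>range (A i). d x y = d' x y" if "i \<le> n" for i
    using that
  proof (induction i)
    case 0
    then show ?case
      using assms(14) by auto
  next
    case (Suc i)
    obtain g where "complete_geodesic X d' g" "range g = range (A (Suc i))"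
      using assms(13) Suc.prems by blast
    moreover have "asymptotic_geodesics X d (A i) (A (Suc i))"
      using assms(12) Suc.prems by force
    ultimately show ?case
      using dist_agree_on_asymptotic_geodesic[OF assms(1,6) levels] assms(11) Suc by simp
  qed
  then show ?thesis
    by blast
qed

end
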